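(* Let $T\in\mathcal M_n$, and let $f,g:[0,\infty)\to[0,\infty)$ be continuous with $f(t)g(t)=t$ for all $t\ge0$. Then for all vectors $x,y\in\mathbb C^n$, \[|\langle\mathfrak RTx,y\rangle|\le\frac12\sqrt{\big\langle(f^2(|T|)+f^2(|T^*|))x,x\big\rangle\,\big\langle(g^2(|T|)+g^2(|T^*|))y,y\big\rangle}\] and \[|\langle\mathfrak ITx,y\rangle|\le\frac12\sqrt{\big\langle(f^2(|T|)+f^2(|T^*|))x,x\big\rangle\,\big\langle(g^2(|T|)+g^2(|T^*|))y,y\big\rangle}.\]
   Context: $\mathcal M_n$ denotes the algebra of $n\times n$ complex matrices. $|X|=(X^*X)^{1/2}$; functions of positive semidefinite matrices are defined by functional calculus. $\mathfrak RT=\frac{T+T^*}{2}$, $\mathfrak IT=\frac{T-T^*}{2i}$. $\langle\cdot,\cdot\rangle$ is the standard inner product on $\mathbb C^n$. *)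

theory Defs
  imports "HOL-Analysis.Analysis"
begin

definition adj :: "complex^'n^'n \<Rightarrow> complex^'n^'n" where
  "adj A = (\<chi> i j. cnj (A $ j $ i))"

definition unitary_mat :: "complex^'n^'n \<Rightarrow> bool" where
  "unitary_mat U \<longleftrightarrow> adj U ** U = mat 1"

definition diag_mat :: "('n \<Rightarrow> complex) \<Rightarrow> complex^'n^'n" where
  "diag_mat d = (\<chi> i j. if i = j then d i else 0)"

text \<open>Functional calculus for Hermitian matrices: if A = U diag(d) U* with U unitary and
  d real, then f(A) = U diag(f(d)) U*. (Well defined for Hermitian A.)\<close>
definition mat_fun :: "(real \<Rightarrow> real) \<Rightarrow> complex^'n^'n \<Rightarrow> complex^'n^'n" where
  "mat_fun f A = (SOME B. \<exists>U d. unitary_mat U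
       \<and> A = U ** diag_mat (\<lambda>i. complex_of_real (d i)) ** adj U
       \<and> B = U ** diag_mat (\<lambda>i. complex_of_real (f (d i))) ** adj U)"

definition mat_abs :: "complex^'n^'n \<Rightarrow> complex^'n^'n" where
  "mat_abs T = mat_fun sqrt (adj T ** T)"

definition re_part :: "complex^'n^'n \<Rightarrow> complex^'n^'n" where
  "re_part T = (\<chi> i j. (T $ i $ j + adj T $ i $ j) / 2)"

definition im_part :: "complex^'n^'n \<Rightarrow> complex^'n^'n" where
  "im_part T = (\<chi> i j. (T $ i $ j - adj T $ i $ j) / (2 * \<i>))"

text \<open>Standard inner product, linear in the first argument.\<close>
definition cinner :: "complex^'n \<Rightarrow> complex^'n \<Rightarrow> complex" where
  "cinner x y = (\<Sum>i\<in>UNIV. x $ i * cnj (y $ i))"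

end

theory Submission
  imports Defs
begin

text \<open>Diagonalise T* T = V D V* and T T* = W E W* with unitaries V and W. Then M = W* T V has
  diagonal Gram matrices M* M = D and M M* = E, so an entry M i j can only be nonzero where the
  eigenvalues d j and e i agree. Since f t * g t = t, this splits M as g(sqrt E) N f(sqrt D) with N,
  the column-normalised M, a contraction, and Cauchy-Schwarz gives the mixed Schwarz inequality
  |<T x, y>|^2 <= <f^2(|T|) x, x> <g^2(|T*|) y, y>. Applying it to T and to T* and combining the two
  bounds by Cauchy-Schwarz in the plane bounds |<T x, y>| + |<T* x, y>|, and hence the real and
  imaginary parts. The spectral theorem itself is proved variationally. The functional calculus of a
  matrix only evaluates a function at eigenvalues.\<close>

section \<open>Matrices and the standard inner product\<close>

lemma matrix_matrix_mult_nth: "(A ** B) $ i $ j = (\<Sum>k\<in>UNIV. A$i$k * B$k$j)"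
  by (simp add: matrix_matrix_mult_def)

lemma matrix_vector_mult_nth: "(A *v x) $ i = (\<Sum>k\<in>UNIV. A$i$k * x$k)"
  by (simp add: matrix_vector_mult_def)

lemma adj_nth [simp]: "adj A $ i $ j = cnj (A $ j $ i)"
  by (simp add: adj_def)

lemma adj_adj [simp]: "adj (adj A) = A"
  by (simp add: vec_eq_iff)

lemma adj_mat_1 [simp]: "adj (mat 1) = mat 1"
  by (simp add: vec_eq_iff mat_def)

lemma adj_matrix_mult: "adj (A ** B) = adj B ** adj A"
  by (simp add: vec_eq_iff matrix_matrix_mult_nth mult.commute)

lemma hermitian_adj_mult_self: "adj (adj A ** A) = adj A ** A"
  by (simp add: adj_matrix_mult)

lemma unitary_mat_right_inverse: "unitary_mat U \<Longrightarrow> U ** adj U = mat 1"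
  unfolding unitary_mat_def using matrix_left_right_inverse by blast

lemma unitary_mat_cancel:
  assumes "unitary_mat U"
  shows "adj U ** (U ** X) = X" "U ** (adj U ** X) = X"
  using assms unitary_mat_right_inverse[OF assms] unfolding unitary_mat_def
  by (simp_all add: matrix_mul_assoc)

lemma unitary_mat_1: "unitary_mat (mat 1)"
  by (simp add: unitary_mat_def)

lemma unitary_mat_mult: "unitary_mat U \<Longrightarrow> unitary_mat V \<Longrightarrow> unitary_mat (U ** V)"
  unfolding unitary_mat_def adj_matrix_mult by (metis matrix_mul_assoc matrix_mul_lid)

lemma diag_mat_nth [simp]: "diag_mat d $ i $ j = (if i = j then d i else 0)"
  by (simp add: diag_mat_def)

lemma matrix_mult_diag_mat_nth: "(X ** diag_mat d) $ i $ j = X $ i $ j * d j"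
  by (simp add: matrix_matrix_mult_nth if_distrib if_distribR cong: if_cong)

lemma diag_mat_mult_nth: "(diag_mat d ** X) $ i $ j = d i * X $ i $ j"
  by (simp add: matrix_matrix_mult_nth if_distrib if_distribR cong: if_cong)

lemma diag_mat_vector_mult_nth: "(diag_mat d *v x) $ i = d i * x $ i"
  by (simp add: matrix_vector_mult_nth if_distrib if_distribR cong: if_cong)

lemma norm_vec_power2: "(norm x)^2 = (\<Sum>i\<in>UNIV. (norm (x $ i))^2)"
  by (simp add: norm_vec_def L2_set_def sum_nonneg)

lemma adj_mult_self_diag_nth: "(adj M ** M) $ j $ j = of_real (\<Sum>i\<in>UNIV. (cmod (M$i$j))^2)"
  unfolding matrix_matrix_mult_nth adj_nth of_real_sum
  by (rule sum.cong) (simp_all add: complex_norm_square mult.commute del: of_real_power)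

lemma cinner_add_left: "cinner (x + y) z = cinner x z + cinner y z"
  by (simp add: cinner_def distrib_right sum.distrib)

lemma cinner_diff_left: "cinner (x - y) z = cinner x z - cinner y z"
  by (simp add: cinner_def left_diff_distrib sum_subtractf)

lemma cinner_scale_left: "cinner (c *s x) z = c * cinner x z"
  by (simp add: cinner_def sum_distrib_left mult_ac)

lemma cinner_matrix_vector_mult_left: "cinner (A *v x) y = cinner x (adj A *v y)"
proof -
  have "cinner (A *v x) y = (\<Sum>i\<in>UNIV. \<Sum>k\<in>UNIV. A$i$k * x$k * cnj (y$i))"
    unfolding cinner_def matrix_vector_mult_nth by (simp add: sum_distrib_right)
  also have "\<dots> = (\<Sum>k\<in>UNIV. \<Sum>i\<in>UNIV. A$i$k * x$k * cnj (y$i))"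
    by (rule sum.swap)
  also have "\<dots> = cinner x (adj A *v y)"
    unfolding cinner_def matrix_vector_mult_nth by (simp add: sum_distrib_left cnj_sum mult_ac)
  finally show ?thesis .
qed

lemma cinner_self: "cinner x x = of_real ((norm x)^2)"
  unfolding cinner_def norm_vec_power2 of_real_sum
  by (rule sum.cong) (simp_all add: complex_norm_square del: of_real_power)

lemma cinner_diag_mat_self:
  "cinner (diag_mat (\<lambda>j. of_real (w j)) *v u) u = of_real (\<Sum>j\<in>UNIV. w j * (cmod (u$j))^2)"
  unfolding cinner_def of_real_sum diag_mat_vector_mult_nth
  by (rule sum.cong) (simp_all add: complex_norm_square mult.assoc del: of_real_power)

lemma cinner_Cauchy_Schwarz: "cmod (cinner x y) \<le> norm x * norm y"
proof -
  have "cmod (cinner x y) \<le> (\<Sum>i\<in>UNIV. \<bar>cmod (x$i)\<bar> * \<bar>cmod (y$i)\<bar>)"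
    unfolding cinner_def by (rule order_trans[OF norm_sum]) (simp add: norm_mult)
  also have "\<dots> \<le> norm x * norm y"
    unfolding norm_vec_def by (rule L2_set_mult_ineq)
  finally show ?thesis .
qed

section \<open>The spectral theorem for Hermitian matrices\<close>

definition plane_rotation :: "'n \<Rightarrow> 'n \<Rightarrow> real \<Rightarrow> complex \<Rightarrow> complex^'n^'n" where
  "plane_rotation i j a z = (\<chi> p q. if q = i then (if p = i then of_real a else if p = j then z else 0)
     else if q = j then (if p = i then - cnj z else if p = j then of_real a else 0)
     else (if p = q then 1 else 0))"

lemma sum_supported_on_two_points:
  fixes h :: "'n::finite \<Rightarrow> 'a::comm_semiring_1"
  assumes "i \<noteq> j"
  shows "(\<Sum>p\<in>UNIV. (if p = i then \<alpha> else if p = j then \<beta> else 0) * h p) = \<alpha> * h i + \<beta> * h j"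
    and "(\<Sum>p\<in>UNIV. h p * (if p = i then \<alpha> else if p = j then \<beta> else 0)) = h i * \<alpha> + h j * \<beta>"
proof -
  have "(\<Sum>p\<in>UNIV. (if p = i then \<alpha> else if p = j then \<beta> else 0) * h p)
      = (\<Sum>p\<in>UNIV. (if p = i then \<alpha> * h p else 0) + (if p = j then \<beta> * h p else 0))"
    by (rule sum.cong) (use assms in auto)
  then show "(\<Sum>p\<in>UNIV. (if p = i then \<alpha> else if p = j then \<beta> else 0) * h p) = \<alpha> * h i + \<beta> * h j"
    by (simp add: sum.distrib)
  then show "(\<Sum>p\<in>UNIV. h p * (if p = i then \<alpha> else if p = j then \<beta> else 0)) = h i * \<alpha> + h j * \<beta>"
    by (simp add: mult.commute)
qed

lemma plane_rotation_nth:
  assumes "i \<noteq> j"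
  shows "plane_rotation i j a z $ p $ i = (if p = i then of_real a else if p = j then z else 0)"
    and "plane_rotation i j a z $ p $ j = (if p = i then - cnj z else if p = j then of_real a else 0)"
    and "k \<noteq> i \<Longrightarrow> k \<noteq> j \<Longrightarrow> plane_rotation i j a z $ p $ k = (if p = k then 1 else 0)"
  using assms by (simp_all add: plane_rotation_def)

lemma cnj_if_zero:
  "cnj (if p = i then \<alpha> else if p = j then \<beta> else 0) = (if p = i then cnj \<alpha> else if p = j then cnj \<beta> else 0)"
  "cnj (if p = k then 1 else 0) = (if p = k then 1 else 0)"
  by simp_all

lemma sum_unit_vector_mult:
  fixes h :: "'n::finite \<Rightarrow> 'a::comm_semiring_1"
  shows "(\<Sum>p\<in>UNIV. (if p = k then 1 else 0) * h p) = h k"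
    and "(\<Sum>p\<in>UNIV. h p * (if p = k then 1 else 0)) = h k"
  by (simp_all add: if_distrib if_distribR cong: if_cong)

lemma unitary_mat_plane_rotation:
  assumes ij: "i \<noteq> j" and az: "a^2 + (cmod z)^2 = 1"
  shows "unitary_mat (plane_rotation i j a z)"
proof -
  have az': "complex_of_real a * complex_of_real a + cnj z * z = 1"
    using az by (metis complex_norm_square mult.commute of_real_add of_real_1 of_real_mult power2_eq_square)
  have "(\<Sum>p\<in>UNIV. cnj (plane_rotation i j a z $ p $ k) * plane_rotation i j a z $ p $ l) = mat 1 $ k $ l" for k l
  proof -
    have "k = i \<or> k = j \<or> k \<noteq> i \<and> k \<noteq> j" "l = i \<or> l = j \<or> l \<noteq> i \<and> l \<noteq> j"
      by blast+
    then show ?thesis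
      using ij az' by (elim disjE conjE)
        (simp_all add: plane_rotation_nth[OF ij] cnj_if_zero sum_supported_on_two_points[OF ij]
          sum_unit_vector_mult mat_def algebra_simps)
  qed
  then show ?thesis
    by (simp add: unitary_mat_def vec_eq_iff matrix_matrix_mult_nth)
qed

definition weighted_trace :: "('n \<Rightarrow> real) \<Rightarrow> complex^'n^'n \<Rightarrow> real" where
  "weighted_trace c X = (\<Sum>k\<in>UNIV. c k * Re (X$k$k))"

lemma congruence_diag_nth:
  "(adj R ** B ** R) $ k $ k = (\<Sum>p\<in>UNIV. cnj (R$p$k) * (\<Sum>q\<in>UNIV. B$p$q * R$q$k))"
  by (simp add: matrix_matrix_mult_nth sum_distrib_left sum_distrib_right mult.assoc) (rule sum.swap)

lemma weighted_trace_plane_rotation_diff: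
  assumes ij: "i \<noteq> j" and herm: "adj B = B" and az: "a^2 + (cmod z)^2 = 1"
  shows "weighted_trace c (adj (plane_rotation i j a z) ** B ** plane_rotation i j a z) - weighted_trace c B
     = (c i - c j) * ((cmod z)^2 * (Re (B$j$j) - Re (B$i$i)) + 2 * a * Re (z * B$i$j))"
proof -
  let ?C = "adj (plane_rotation i j a z) ** B ** plane_rotation i j a z"
  have a2: "a^2 = 1 - (cmod z)^2"
    using az by simp
  have Bji: "B$j$i = cnj (B$i$j)"
    using herm by (metis adj_nth)
  have zsq: "cmod z * cmod z = Re z * Re z + Im z * Im z"
    using cmod_power2[of z] by (simp add: power2_eq_square)
  have Cii: "Re (?C$i$i) = a^2 * Re (B$i$i) + (cmod z)^2 * Re (B$j$j) + 2 * a * Re (z * B$i$j)"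
    using az
    by (simp only: congruence_diag_nth plane_rotation_nth[OF ij] cnj_if_zero sum_supported_on_two_points[OF ij])
      (simp add: Bji algebra_simps power2_eq_square zsq)
  have Cjj: "Re (?C$j$j) = (cmod z)^2 * Re (B$i$i) + a^2 * Re (B$j$j) - 2 * a * Re (z * B$i$j)"
    using az
    by (simp only: congruence_diag_nth plane_rotation_nth[OF ij] cnj_if_zero sum_supported_on_two_points[OF ij])
      (simp add: Bji algebra_simps power2_eq_square zsq)
  have Ckk: "?C$k$k = B$k$k" if "k \<noteq> i" "k \<noteq> j" for k
    using that by (simp add: congruence_diag_nth plane_rotation_nth[OF ij] cnj_if_zero sum_unit_vector_mult)
  have "weighted_trace c ?C - weighted_trace c B = (\<Sum>k\<in>UNIV. c k * (Re (?C$k$k) - Re (B$k$k)))"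
    by (simp add: weighted_trace_def sum_subtractf right_diff_distrib)
  also have "\<dots> = (\<Sum>k\<in>UNIV. (if k = i then 1 else if k = j then 1 else 0) * (c k * (Re (?C$k$k) - Re (B$k$k))))"
    by (rule sum.cong) (auto simp: Ckk)
  also have "\<dots> = c i * (Re (?C$i$i) - Re (B$i$i)) + c j * (Re (?C$j$j) - Re (B$j$j))"
    by (simp add: sum_supported_on_two_points[OF ij])
  also have "\<dots> = (c i - c j) * ((cmod z)^2 * (Re (B$j$j) - Re (B$i$i)) + 2 * a * Re (z * B$i$j))"
    unfolding Cii Cjj a2 by (simp add: algebra_simps)
  finally show ?thesis .
qed

lemma weighted_trace_plane_rotation_increases:
  assumes ij: "i \<noteq> j" and herm: "adj B = B" and cij: "c i \<noteq> c j" and b0: "B$i$j \<noteq> 0"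
  obtains a z where "a^2 + (cmod z)^2 = 1"
    and "weighted_trace c (adj (plane_rotation i j a z) ** B ** plane_rotation i j a z) > weighted_trace c B"
proof -
  define b where "b = B$i$j"
  define \<beta> where "\<beta> = (cmod b)^2"
  define \<delta> where "\<delta> = Re (B$j$j) - Re (B$i$i)"
  define D where "D = c i - c j"
  \<comment> \<open>Along z = t sgn D cnj b the gain 2 a t |D| \<beta> is of first order in t, and this t is small
    enough for it to dominate the second-order term t^2 D \<delta> \<beta>.\<close>
  define t where "t = 1 / (2 * (cmod b + \<bar>\<delta>\<bar> + 1))"
  define z where "z = complex_of_real (t * sgn D) * cnj b"
  define a where "a = sqrt (1 - (cmod z)^2)"
  have \<beta>pos: "\<beta> > 0"
    using b0 by (simp add: \<beta>_def b_def)
  have D0: "D \<noteq> 0"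
    using cij by (simp add: D_def)
  have den: "0 < 2 * (cmod b + \<bar>\<delta>\<bar> + 1)"
    by (simp add: add_nonneg_pos)
  then have tpos: "t > 0"
    by (simp add: t_def)
  have tb: "t * cmod b \<le> 1/2" and t\<delta>: "t * \<bar>\<delta>\<bar> \<le> 1/2"
    unfolding t_def using den by (simp_all add: field_simps)
  have cz: "cmod z = t * cmod b"
    using tpos D0 by (simp add: z_def norm_mult abs_sgn)
  have cz2: "(cmod z)^2 \<le> 1/4"
    using power_mono[OF tb, of 2] cz tpos by (simp add: power2_eq_square)
  have az: "a^2 + (cmod z)^2 = 1"
    using cz2 by (simp add: a_def)
  have ahalf: "a \<ge> 1/2"
    unfolding a_def by (rule real_le_rsqrt) (use cz2 in \<open>simp add: power2_eq_square\<close>)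
  have Rezb: "Re (z * b) = t * sgn D * \<beta>"
    by (simp add: z_def \<beta>_def cmod_power2) (simp add: power2_eq_square algebra_simps)
  have "weighted_trace c (adj (plane_rotation i j a z) ** B ** plane_rotation i j a z) - weighted_trace c B
      = D * ((cmod z)^2 * \<delta> + 2 * a * (t * sgn D * \<beta>))"
    unfolding weighted_trace_plane_rotation_diff[OF ij herm az] b_def[symmetric] Rezb D_def[symmetric] \<delta>_def[symmetric] ..
  also have "\<dots> = t * \<beta> * (D * t * \<delta> + 2 * a * (D * sgn D))"
    by (simp add: cz \<beta>_def power_mult_distrib power2_eq_square algebra_simps)
  also have "D * sgn D = \<bar>D\<bar>"
    by (simp add: sgn_if)
  finally have "weighted_trace c (adj (plane_rotation i j a z) ** B ** plane_rotation i j a z) - weighted_trace c B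
      = t * \<beta> * (D * t * \<delta> + 2 * a * \<bar>D\<bar>)" .
  moreover have "D * t * \<delta> + 2 * a * \<bar>D\<bar> > 0"
  proof -
    have "- (D * t * \<delta>) \<le> \<bar>D * t * \<delta>\<bar>"
      by (rule abs_ge_minus_self)
    also have "\<dots> = \<bar>D\<bar> * (t * \<bar>\<delta>\<bar>)"
      using tpos by (simp add: abs_mult)
    also have "\<dots> \<le> \<bar>D\<bar> * (1/2)"
      using t\<delta> by (intro mult_left_mono) auto
    also have "\<dots> < 2 * a * \<bar>D\<bar>"
      using ahalf D0 by simp
    finally show ?thesis by linarith
  qed
  ultimately have "weighted_trace c (adj (plane_rotation i j a z) ** B ** plane_rotation i j a z) - weighted_trace c B > 0"
    using tpos \<beta>pos by simp
  then show ?thesis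
    by (intro that[OF az]) simp
qed

lemma norm_unitary_mat: "unitary_mat U \<Longrightarrow> norm U = sqrt CARD('n)"
  for U :: "complex^'n^'n"
proof -
  assume "unitary_mat U"
  then have col: "(\<Sum>p\<in>UNIV. (cmod (U$p$k))^2) = 1" for k
    using adj_mult_self_diag_nth[of U k] by (simp add: unitary_mat_def mat_def del: of_real_sum of_real_power)
  have "(norm U)^2 = (\<Sum>p\<in>UNIV. \<Sum>k\<in>UNIV. (cmod (U$p$k))^2)"
    by (simp add: norm_vec_power2)
  also have "\<dots> = (\<Sum>k\<in>UNIV. \<Sum>p\<in>UNIV. (cmod (U$p$k))^2)"
    by (rule sum.swap)
  also have "\<dots> = CARD('n)"
    by (simp add: col)
  finally show ?thesis
    by (simp add: real_sqrt_unique)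
qed

lemma compact_unitary_mat: "compact {U::complex^'n^'n. unitary_mat U}"
proof (rule compact_eq_bounded_closed[THEN iffD2], rule conjI)
  show "bounded {U::complex^'n^'n. unitary_mat U}"
    by (rule boundedI[of _ "sqrt CARD('n)"]) (simp add: norm_unitary_mat)
  have "{U::complex^'n^'n. unitary_mat U} = (\<Inter>k. \<Inter>l. {U. (\<Sum>p\<in>UNIV. cnj (U$p$k) * U$p$l) = mat 1 $ k $ l})"
    by (auto simp: unitary_mat_def vec_eq_iff matrix_matrix_mult_nth)
  also have "closed \<dots>"
    by (intro closed_INT ballI closed_Collect_eq continuous_intros)
  finally show "closed {U::complex^'n^'n. unitary_mat U}" .
qed

text \<open>For pairwise distinct weights c, a maximiser U of weighted_trace c (adj U ** A ** U) over the
  compact unitary group diagonalises A: otherwise a rotation in the plane of a nonzero off-diagonal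
  entry would increase the weighted trace.\<close>

lemma weighted_trace_maximiser_diagonal:
  assumes herm: "adj A = A" and "inj c" and U: "unitary_mat U"
    and Umax: "\<And>V. unitary_mat V \<Longrightarrow> weighted_trace c (adj V ** A ** V) \<le> weighted_trace c (adj U ** A ** U)"
    and ij: "i \<noteq> j"
  shows "(adj U ** A ** U) $ i $ j = 0"
proof (rule ccontr)
  define B where "B = adj U ** A ** U"
  have hB: "adj B = B"
    by (simp add: B_def adj_matrix_mult herm matrix_mul_assoc)
  assume "(adj U ** A ** U) $ i $ j \<noteq> 0"
  moreover have "c i \<noteq> c j"
    using \<open>inj c\<close> ij by (simp add: inj_eq)
  ultimately obtain a z where az: "a^2 + (cmod z)^2 = 1"
    and gt: "weighted_trace c (adj (plane_rotation i j a z) ** B ** plane_rotation i j a z) > weighted_trace c B"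
    using weighted_trace_plane_rotation_increases[OF ij hB] unfolding B_def by blast
  have "adj (plane_rotation i j a z) ** B ** plane_rotation i j a z
      = adj (U ** plane_rotation i j a z) ** A ** (U ** plane_rotation i j a z)"
    by (simp add: B_def adj_matrix_mult matrix_mul_assoc)
  with gt Umax[OF unitary_mat_mult[OF U unitary_mat_plane_rotation[OF ij az]]] show False
    by (simp add: B_def)
qed

lemma hermitian_unitary_diagonalization:
  fixes A :: "complex^'n^'n"
  assumes herm: "adj A = A"
  obtains U d where "unitary_mat U" "A = U ** diag_mat (\<lambda>i. complex_of_real (d i)) ** adj U"
proof -
  obtain n :: "'n \<Rightarrow> nat" where "inj n"
    using finite_imp_inj_to_nat_seg[of "UNIV::'n set"] by auto
  define c where "c k = real (n k)" for k
  have "inj c"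
    using \<open>inj n\<close> by (simp add: c_def inj_def)
  let ?F = "\<lambda>U. weighted_trace c (adj U ** A ** U)"
  have "continuous_on {U. unitary_mat U} ?F"
    unfolding weighted_trace_def matrix_matrix_mult_nth adj_nth by (intro continuous_intros)
  moreover have "{U::complex^'n^'n. unitary_mat U} \<noteq> {}"
    using unitary_mat_1 by blast
  ultimately obtain U where U: "unitary_mat U" and Umax: "\<And>V. unitary_mat V \<Longrightarrow> ?F V \<le> ?F U"
    using continuous_attains_sup[OF compact_unitary_mat] by auto
  define B where "B = adj U ** A ** U"
  have hB: "adj B = B"
    by (simp add: B_def adj_matrix_mult herm matrix_mul_assoc)
  have off: "B$i$j = 0" if "i \<noteq> j" for i j
    unfolding B_def by (rule weighted_trace_maximiser_diagonal[OF herm \<open>inj c\<close> U Umax that])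
  define d where "d i = Re (B$i$i)" for i
  have "Im (B$i$i) = 0" for i
    using arg_cong[OF hB, of "\<lambda>X. X$i$i"] by (simp add: complex_eq_iff)
  then have "B = diag_mat (\<lambda>i. complex_of_real (d i))"
    by (auto simp: vec_eq_iff off complex_eq_iff d_def)
  moreover have "U ** B ** adj U = A"
    by (simp add: B_def matrix_mul_assoc[symmetric] unitary_mat_cancel[OF U] unitary_mat_right_inverse[OF U])
  ultimately have "A = U ** diag_mat (\<lambda>i. complex_of_real (d i)) ** adj U"
    by simp
  then show ?thesis
    by (rule that[OF U])
qed

section \<open>Functional calculus\<close>

lemma commute_diag_mat_fun:
  assumes "W ** diag_mat (\<lambda>i. complex_of_real (d i)) = diag_mat (\<lambda>i. complex_of_real (e i)) ** W"
  shows "W ** diag_mat (\<lambda>i. complex_of_real (f (d i))) = diag_mat (\<lambda>i. complex_of_real (f (e i))) ** W"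
proof -
  have "W$i$j * of_real (f (d j)) = of_real (f (e i)) * W$i$j" for i j
  proof -
    have "W$i$j * of_real (d j) = of_real (e i) * W$i$j"
      using assms by (metis matrix_mult_diag_mat_nth diag_mat_mult_nth)
    then show ?thesis
      by (cases "W$i$j = 0") (auto simp: mult.commute)
  qed
  then show ?thesis
    by (simp add: vec_eq_iff matrix_mult_diag_mat_nth diag_mat_mult_nth)
qed

text \<open>The choice in mat_fun is harmless: two unitary diagonalisations U, V of the same
  matrix are intertwined by the unitary adj V ** U, which then also intertwines f of the diagonals.\<close>

lemma unitary_diagonalization_fun_unique:
  assumes U: "unitary_mat U" and V: "unitary_mat V"
    and eq: "U ** diag_mat (\<lambda>i. complex_of_real (d i)) ** adj U
      = V ** diag_mat (\<lambda>i. complex_of_real (e i)) ** adj V"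
  shows "U ** diag_mat (\<lambda>i. complex_of_real (f (d i))) ** adj U
      = V ** diag_mat (\<lambda>i. complex_of_real (f (e i))) ** adj V"
proof -
  define W where "W = adj V ** U"
  define Dd where "Dd = diag_mat (\<lambda>i. complex_of_real (d i))"
  define De where "De = diag_mat (\<lambda>i. complex_of_real (e i))"
  note cancel = unitary_mat_cancel[OF U] unitary_mat_cancel[OF V]
  have eq': "U ** (Dd ** adj U) = V ** (De ** adj V)"
    using eq by (simp add: Dd_def De_def matrix_mul_assoc)
  have "W ** Dd = adj V ** (U ** (Dd ** adj U)) ** U"
    using U by (simp add: W_def matrix_mul_assoc[symmetric] unitary_mat_def)
  also have "\<dots> = De ** W"
    unfolding eq' by (simp add: W_def matrix_mul_assoc[symmetric] cancel)
  finally have "W ** diag_mat (\<lambda>i. complex_of_real (f (d i))) = diag_mat (\<lambda>i. complex_of_real (f (e i))) ** W"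
    unfolding Dd_def De_def by (rule commute_diag_mat_fun)
  then have "V ** (W ** diag_mat (\<lambda>i. complex_of_real (f (d i)))) ** adj U
      = V ** (diag_mat (\<lambda>i. complex_of_real (f (e i))) ** W) ** adj U"
    by simp
  then show ?thesis
    by (simp add: W_def matrix_mul_assoc[symmetric] cancel unitary_mat_right_inverse[OF U])
qed

lemma mat_fun_unitary_diagonalization:
  assumes U: "unitary_mat U" and A: "A = U ** diag_mat (\<lambda>i. complex_of_real (d i)) ** adj U"
  shows "mat_fun f A = U ** diag_mat (\<lambda>i. complex_of_real (f (d i))) ** adj U"
proof -
  let ?P = "\<lambda>B. \<exists>U d. unitary_mat U
       \<and> A = U ** diag_mat (\<lambda>i. complex_of_real (d i)) ** adj U
       \<and> B = U ** diag_mat (\<lambda>i. complex_of_real (f (d i))) ** adj U"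
  have "?P (U ** diag_mat (\<lambda>i. complex_of_real (f (d i))) ** adj U)"
    using U A by blast
  then have "?P (mat_fun f A)"
    unfolding mat_fun_def by (rule someI)
  then obtain V e where V: "unitary_mat V" "A = V ** diag_mat (\<lambda>i. complex_of_real (e i)) ** adj V"
    and fA: "mat_fun f A = V ** diag_mat (\<lambda>i. complex_of_real (f (e i))) ** adj V"
    by blast
  show ?thesis
    unfolding fA by (rule unitary_diagonalization_fun_unique[OF V(1) U]) (use A V in simp)
qed

lemma mat_fun_mat_abs:
  fixes S :: "complex^'n^'n"
  obtains V d where "unitary_mat V" "adj S ** S = V ** diag_mat (\<lambda>i. complex_of_real (d i)) ** adj V"
    "\<And>h. mat_fun h (mat_abs S) = V ** diag_mat (\<lambda>i. complex_of_real (h (sqrt (d i)))) ** adj V"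
proof -
  obtain V d where V: "unitary_mat V" and SS: "adj S ** S = V ** diag_mat (\<lambda>i. complex_of_real (d i)) ** adj V"
    using hermitian_unitary_diagonalization[OF hermitian_adj_mult_self] by blast
  have "mat_abs S = V ** diag_mat (\<lambda>i. complex_of_real (sqrt (d i))) ** adj V"
    unfolding mat_abs_def by (rule mat_fun_unitary_diagonalization[OF V SS])
  then show ?thesis
    by (intro that[OF V SS] mat_fun_unitary_diagonalization[OF V])
qed

lemma cinner_unitary_diagonalization_self:
  assumes "unitary_mat V"
  shows "cinner ((V ** diag_mat (\<lambda>i. complex_of_real (w i)) ** adj V) *v x) x
       = of_real (\<Sum>j\<in>UNIV. w j * (cmod ((adj V *v x)$j))^2)"
proof -
  have "(V ** diag_mat (\<lambda>i. complex_of_real (w i)) ** adj V) *v x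
      = V *v (diag_mat (\<lambda>i. complex_of_real (w i)) *v (adj V *v x))"
    by (simp add: matrix_vector_mul_assoc matrix_mul_assoc)
  then show ?thesis
    by (simp only: cinner_matrix_vector_mult_left[of V] cinner_diag_mat_self)
qed

lemma mat_fun_square_mat_abs_nonneg:
  "Re (cinner (mat_fun (\<lambda>t. (h t)^2) (mat_abs S) *v x) x) \<ge> 0"
proof (rule mat_fun_mat_abs[of S])
  fix V d
  assume "unitary_mat V"
    and "\<And>h. mat_fun h (mat_abs S) = V ** diag_mat (\<lambda>i. complex_of_real (h (sqrt (d i)))) ** adj V"
  then show ?thesis
    by (simp add: cinner_unitary_diagonalization_self sum_nonneg del: of_real_power)
qed

section \<open>The mixed Schwarz inequality\<close>

lemma adj_diag_mat_of_real: "adj (diag_mat (\<lambda>i. complex_of_real (r i))) = diag_mat (\<lambda>i. complex_of_real (r i))"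
  by (simp add: vec_eq_iff)

lemma norm_diag_mat_vector_mult:
  "norm (diag_mat (\<lambda>j. complex_of_real (r j)) *v u) = sqrt (\<Sum>j\<in>UNIV. (r j)^2 * (cmod (u$j))^2)"
  by (simp add: norm_vec_def L2_set_def diag_mat_vector_mult_nth norm_mult power_mult_distrib)

lemma diagonal_gram_nth:
  assumes "adj M ** M = diag_mat (\<lambda>j. complex_of_real (d j))"
  shows "d j = (\<Sum>i\<in>UNIV. (cmod (M$i$j))^2)"
proof -
  have "complex_of_real (d j) = complex_of_real (\<Sum>i\<in>UNIV. (cmod (M$i$j))^2)"
    using arg_cong[OF assms, of "\<lambda>X. X$j$j"] adj_mult_self_diag_nth[of M j]
    by (simp del: of_real_sum of_real_power)
  then show ?thesis
    by (simp only: of_real_eq_iff)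
qed

lemma diagonal_grams_nonzero_nth:
  assumes MM: "adj M ** M = diag_mat (\<lambda>j. complex_of_real (d j))"
    and MM': "M ** adj M = diag_mat (\<lambda>i. complex_of_real (e i))"
    and nz: "M$i$j \<noteq> 0"
  shows "e i = d j" and "0 < d j"
proof -
  have "M ** (adj M ** M) = (M ** adj M) ** M"
    by (simp add: matrix_mul_assoc)
  then have "M$i$j * of_real (d j) = of_real (e i) * M$i$j"
    unfolding MM MM' by (metis matrix_mult_diag_mat_nth diag_mat_mult_nth)
  then show "e i = d j"
    using nz by (simp add: mult.commute)
  have "0 < (cmod (M$i$j))^2"
    using nz by simp
  also have "\<dots> \<le> d j"
    unfolding diagonal_gram_nth[OF MM, of j] by (rule member_le_sum) auto
  finally show "0 < d j" .
qed

lemma norm_column_normalized_le: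
  assumes MM: "adj M ** M = diag_mat (\<lambda>j. complex_of_real (d j))"
  shows "norm ((\<chi> i j. M$i$j / complex_of_real (sqrt (d j))) *v u) \<le> norm u"
proof -
  define N where "N = (\<chi> i j. M$i$j / complex_of_real (sqrt (d j)))"
  have d_nonneg: "d j \<ge> 0" for j
    unfolding diagonal_gram_nth[OF MM] by (simp add: sum_nonneg)
  have NN: "adj N ** N = diag_mat (\<lambda>j. complex_of_real (if d j = 0 then 0 else 1))"
  proof -
    have "(adj N ** N)$j$k = (adj M ** M)$j$k / (complex_of_real (sqrt (d j)) * complex_of_real (sqrt (d k)))" for j k
      by (simp add: matrix_matrix_mult_nth N_def sum_divide_distrib)
    moreover have "complex_of_real (sqrt (d j)) * complex_of_real (sqrt (d j)) = complex_of_real (d j)" for j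
      using d_nonneg[of j] by (simp flip: of_real_mult)
    ultimately show ?thesis
      unfolding MM by (simp add: vec_eq_iff)
  qed
  have "(norm (N *v u))^2 = Re (cinner (adj N *v (N *v u)) u)"
    by (simp add: cinner_matrix_vector_mult_left cinner_self)
  also have "\<dots> = (\<Sum>j\<in>UNIV. (if d j = 0 then 0 else 1) * (cmod (u$j))^2)"
    by (simp only: matrix_vector_mul_assoc NN cinner_diag_mat_self Re_complex_of_real)
  also have "\<dots> \<le> (\<Sum>j\<in>UNIV. (cmod (u$j))^2)"
    by (intro sum_mono) auto
  also have "\<dots> = (norm u)^2"
    by (simp add: norm_vec_power2)
  finally show ?thesis
    unfolding N_def by (rule power2_le_imp_le) simp
qed

text \<open>By diagonal_grams_nonzero_nth, M = G ** N ** F with G, F the diagonal matrices of g and f at the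
  singular values and N the column-normalised M.\<close>

lemma cinner_diagonal_grams_le:
  assumes MM: "adj M ** M = diag_mat (\<lambda>j. complex_of_real (d j))"
    and MM': "M ** adj M = diag_mat (\<lambda>i. complex_of_real (e i))"
    and fg: "\<And>t. t \<ge> 0 \<Longrightarrow> f t * g t = t"
  shows "cmod (cinner (M *v a) b) \<le> norm (diag_mat (\<lambda>j. complex_of_real (f (sqrt (d j)))) *v a)
    * norm (diag_mat (\<lambda>i. complex_of_real (g (sqrt (e i)))) *v b)"
proof -
  define N where "N = (\<chi> i j. M$i$j / complex_of_real (sqrt (d j)))"
  define F where "F = diag_mat (\<lambda>j. complex_of_real (f (sqrt (d j))))"
  define G where "G = diag_mat (\<lambda>i. complex_of_real (g (sqrt (e i))))"
  have "M$i$j = of_real (g (sqrt (e i))) * N$i$j * of_real (f (sqrt (d j)))" for i j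
  proof (cases "M$i$j = 0")
    case True
    then show ?thesis by (simp add: N_def)
  next
    case False
    note ed = diagonal_grams_nonzero_nth[OF MM MM' False]
    have "f (sqrt (d j)) * g (sqrt (e i)) = sqrt (d j)"
      using fg[of "sqrt (d j)"] ed by simp
    then have "complex_of_real (g (sqrt (e i))) * complex_of_real (f (sqrt (d j))) = complex_of_real (sqrt (d j))"
      by (metis mult.commute of_real_mult)
    then show ?thesis
      using ed by (simp add: N_def field_simps)
  qed
  then have "M = G ** N ** F"
    by (simp add: vec_eq_iff G_def F_def matrix_mult_diag_mat_nth diag_mat_mult_nth)
  then have "cinner (M *v a) b = cinner (N *v (F *v a)) (G *v b)"
    by (simp add: matrix_vector_mul_assoc[symmetric] cinner_matrix_vector_mult_left G_def adj_diag_mat_of_real)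
  also have "cmod \<dots> \<le> norm (N *v (F *v a)) * norm (G *v b)"
    by (rule cinner_Cauchy_Schwarz)
  also have "\<dots> \<le> norm (F *v a) * norm (G *v b)"
    unfolding N_def by (intro mult_right_mono norm_column_normalized_le[OF MM]) simp
  finally show ?thesis
    unfolding F_def G_def .
qed

lemma cinner_mixed_Schwarz:
  fixes S :: "complex^'n^'n"
  assumes fg: "\<And>t. t \<ge> 0 \<Longrightarrow> f t * g t = t"
  shows "cmod (cinner (S *v x) y) \<le>
     sqrt (Re (cinner (mat_fun (\<lambda>t. (f t)^2) (mat_abs S) *v x) x))
   * sqrt (Re (cinner (mat_fun (\<lambda>t. (g t)^2) (mat_abs (adj S)) *v y) y))"
proof -
  obtain V d where V: "unitary_mat V" and SS: "adj S ** S = V ** diag_mat (\<lambda>i. complex_of_real (d i)) ** adj V"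
    and F: "\<And>h. mat_fun h (mat_abs S) = V ** diag_mat (\<lambda>i. complex_of_real (h (sqrt (d i)))) ** adj V"
    by (fact mat_fun_mat_abs[of S])
  obtain W e where W: "unitary_mat W" and SS': "S ** adj S = W ** diag_mat (\<lambda>i. complex_of_real (e i)) ** adj W"
    and G: "\<And>h. mat_fun h (mat_abs (adj S)) = W ** diag_mat (\<lambda>i. complex_of_real (h (sqrt (e i)))) ** adj W"
    by (fact mat_fun_mat_abs[of "adj S", unfolded adj_adj])
  define M where "M = adj W ** S ** V"
  note cancel = unitary_mat_cancel[OF V] unitary_mat_cancel[OF W]
  have MM: "adj M ** M = diag_mat (\<lambda>i. complex_of_real (d i))"
  proof -
    have "adj M ** M = adj V ** (adj S ** S) ** V"
      by (simp add: M_def adj_matrix_mult matrix_mul_assoc[symmetric] cancel)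
    then show ?thesis
      unfolding SS using V by (simp add: matrix_mul_assoc[symmetric] cancel unitary_mat_def)
  qed
  have MM': "M ** adj M = diag_mat (\<lambda>i. complex_of_real (e i))"
  proof -
    have "M ** adj M = adj W ** (S ** adj S) ** W"
      by (simp add: M_def adj_matrix_mult matrix_mul_assoc[symmetric] cancel unitary_mat_right_inverse[OF V])
    then show ?thesis
      unfolding SS' using W by (simp add: matrix_mul_assoc[symmetric] cancel unitary_mat_def)
  qed
  have "M ** adj V = adj W ** S"
    by (simp add: M_def matrix_mul_assoc[symmetric] unitary_mat_right_inverse[OF V])
  then have "M *v (adj V *v x) = adj W *v (S *v x)"
    by (metis matrix_vector_mul_assoc)
  then have "cinner (M *v (adj V *v x)) (adj W *v y) = cinner (S *v x) (W *v (adj W *v y))"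
    by (simp only: cinner_matrix_vector_mult_left adj_adj)
  also have "W *v (adj W *v y) = y"
    by (simp add: matrix_vector_mul_assoc unitary_mat_right_inverse[OF W])
  finally have "cinner (S *v x) y = cinner (M *v (adj V *v x)) (adj W *v y)" ..
  also have "cmod \<dots> \<le> norm (diag_mat (\<lambda>j. complex_of_real (f (sqrt (d j)))) *v (adj V *v x))
      * norm (diag_mat (\<lambda>i. complex_of_real (g (sqrt (e i)))) *v (adj W *v y))"
    by (rule cinner_diagonal_grams_le[OF MM MM' fg])
  also have "\<dots> = sqrt (Re (cinner (mat_fun (\<lambda>t. (f t)^2) (mat_abs S) *v x) x))
      * sqrt (Re (cinner (mat_fun (\<lambda>t. (g t)^2) (mat_abs (adj S)) *v y) y))"
    unfolding F G by (simp add: cinner_unitary_diagonalization_self[OF V] cinner_unitary_diagonalization_self[OF W]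
        norm_diag_mat_vector_mult del: of_real_power)
  finally show ?thesis .
qed

section \<open>Real and imaginary parts\<close>

lemma sqrt_mult_add_sqrt_mult_le:
  fixes a1 a2 b1 b2 :: real
  assumes "a1 \<ge> 0" "a2 \<ge> 0" "b1 \<ge> 0" "b2 \<ge> 0"
  shows "sqrt a1 * sqrt b1 + sqrt a2 * sqrt b2 \<le> sqrt ((a1 + a2) * (b1 + b2))"
proof (rule real_le_rsqrt)
  have "0 \<le> (sqrt a1 * sqrt b2 - sqrt a2 * sqrt b1)^2"
    by simp
  then show "(sqrt a1 * sqrt b1 + sqrt a2 * sqrt b2)^2 \<le> (a1 + a2) * (b1 + b2)"
    using assms by (simp add: power2_eq_square algebra_simps real_sqrt_mult_self)
qed

lemma re_part_vector_mult: "re_part T *v x = (1/2) *s (T *v x + adj T *v x)"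
  by (simp add: vec_eq_iff re_part_def matrix_vector_mult_nth sum_divide_distrib[symmetric]
      sum.distrib[symmetric] distrib_right)

lemma im_part_vector_mult: "im_part T *v x = (1/(2*\<i>)) *s (T *v x - adj T *v x)"
proof -
  have "((1/(2*\<i>)) *s (T *v x - adj T *v x))$i = (\<Sum>k\<in>UNIV. (1/(2*\<i>)) * (T$i$k*x$k - cnj(T$k$i)*x$k))" for i
    by (simp only: vector_scalar_mult_def vec_lambda_beta vector_minus_component matrix_vector_mult_nth adj_nth
        sum_subtractf sum_distrib_left right_diff_distrib)
  also have "\<dots> i = (im_part T *v x)$i" for i
    unfolding matrix_vector_mult_nth im_part_def by (rule sum.cong) (simp_all add: field_simps)
  finally show ?thesis
    by (simp add: vec_eq_iff)
qed

lemma cinner_re_part: "cinner (re_part T *v x) y = (cinner (T *v x) y + cinner (adj T *v x) y) / 2"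
  by (simp add: re_part_vector_mult cinner_scale_left cinner_add_left)

lemma cinner_im_part: "cinner (im_part T *v x) y = (cinner (T *v x) y - cinner (adj T *v x) y) / (2 * \<i>)"
  unfolding im_part_vector_mult cinner_scale_left cinner_diff_left by simp

lemma cmod_cinner_re_im_part_le:
  "cmod (cinner (re_part T *v x) y) \<le> (cmod (cinner (T *v x) y) + cmod (cinner (adj T *v x) y)) / 2"
  "cmod (cinner (im_part T *v x) y) \<le> (cmod (cinner (T *v x) y) + cmod (cinner (adj T *v x) y)) / 2"
  unfolding cinner_re_part cinner_im_part
  by (simp_all add: norm_divide norm_mult norm_triangle_ineq norm_triangle_ineq4 divide_right_mono)

theorem theorem3p8:
  fixes T :: "complex^'n^'n" and f g :: "real \<Rightarrow> real"
  assumes "continuous_on {0..} f" and "continuous_on {0..} g"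
    and "\<And>t. t \<ge> 0 \<Longrightarrow> f t \<ge> 0" and "\<And>t. t \<ge> 0 \<Longrightarrow> g t \<ge> 0"
    and "\<And>t. t \<ge> 0 \<Longrightarrow> f t * g t = t"
  shows "\<forall>x y :: complex^'n.
     cmod (cinner (re_part T *v x) y) \<le> 1/2 * sqrt (
       Re (cinner ((mat_fun (\<lambda>t. (f t)^2) (mat_abs T) + mat_fun (\<lambda>t. (f t)^2) (mat_abs (adj T))) *v x) x)
     * Re (cinner ((mat_fun (\<lambda>t. (g t)^2) (mat_abs T) + mat_fun (\<lambda>t. (g t)^2) (mat_abs (adj T))) *v y) y))
   \<and> cmod (cinner (im_part T *v x) y) \<le> 1/2 * sqrt (
       Re (cinner ((mat_fun (\<lambda>t. (f t)^2) (mat_abs T) + mat_fun (\<lambda>t. (f t)^2) (mat_abs (adj T))) *v x) x)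
     * Re (cinner ((mat_fun (\<lambda>t. (g t)^2) (mat_abs T) + mat_fun (\<lambda>t. (g t)^2) (mat_abs (adj T))) *v y) y))"
proof (intro allI)
  fix x y :: "complex^'n"
  let ?q = "\<lambda>h S v. Re (cinner (mat_fun (\<lambda>t. (h t)^2) (mat_abs S) *v v) v)"
  have "cmod (cinner (T *v x) y) \<le> sqrt (?q f T x) * sqrt (?q g (adj T) y)"
    by (rule cinner_mixed_Schwarz[OF assms(5)])
  moreover have "cmod (cinner (adj T *v x) y) \<le> sqrt (?q f (adj T) x) * sqrt (?q g T y)"
    using cinner_mixed_Schwarz[OF assms(5), of "adj T"] by simp
  moreover have "sqrt (?q f T x) * sqrt (?q g (adj T) y) + sqrt (?q f (adj T) x) * sqrt (?q g T y)
      \<le> sqrt ((?q f T x + ?q f (adj T) x) * (?q g (adj T) y + ?q g T y))"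
    by (intro sqrt_mult_add_sqrt_mult_le mat_fun_square_mat_abs_nonneg)
  ultimately have "(cmod (cinner (T *v x) y) + cmod (cinner (adj T *v x) y)) / 2
      \<le> 1/2 * sqrt ((?q f T x + ?q f (adj T) x) * (?q g T y + ?q g (adj T) y))"
    by (simp add: add.commute)
  then show "cmod (cinner (re_part T *v x) y) \<le> 1/2 * sqrt (
       Re (cinner ((mat_fun (\<lambda>t. (f t)^2) (mat_abs T) + mat_fun (\<lambda>t. (f t)^2) (mat_abs (adj T))) *v x) x)
     * Re (cinner ((mat_fun (\<lambda>t. (g t)^2) (mat_abs T) + mat_fun (\<lambda>t. (g t)^2) (mat_abs (adj T))) *v y) y))
   \<and> cmod (cinner (im_part T *v x) y) \<le> 1/2 * sqrt (
       Re (cinner ((mat_fun (\<lambda>t. (f t)^2) (mat_abs T) + mat_fun (\<lambda>t. (f t)^2) (mat_abs (adj T))) *v x) x)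
     * Re (cinner ((mat_fun (\<lambda>t. (g t)^2) (mat_abs T) + mat_fun (\<lambda>t. (g t)^2) (mat_abs (adj T))) *v y) y))"
    using cmod_cinner_re_im_part_le[of T x y]
    by (simp add: matrix_vector_mult_add_rdistrib cinner_add_left)
qed

end
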